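(* Let $\Gamma$ be a finite, simple and undirected graph. Then there exists a finite nilpotent group $G$ such that $\Delta_D(G)$ contains $\Gamma$ as an induced subgraph.
   Context: For a finite group $G$, let $M(G)$ denote its Schur multiplier. A Schur cover of $G$ is a group $\tilde{G}$ with a central extension $\{e\}\to M(G)\xrightarrow{\iota}\tilde{G}\xrightarrow{\pi}G\to\{e\}$ such that $\iota(M(G))\subseteq Z(\tilde{G})\cap[\tilde{G},\tilde{G}]$ and $\tilde G$ has maximal order among such extensions. The deep commuting graph $\Delta_D(G)$ is the simple graph with vertex set $G$ in which two distinct vertices are adjacent if and only if their preimages under $\pi$ commute in $\tilde{G}$ (independent of the choice of Schur cover and preimages). *)

theory Defs
  imports "HOL-Algebra.Algebra"
begin

definition group_center :: "('a, 'b) monoid_scheme \<Rightarrow> 'a set" where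
  "group_center G = {z \<in> carrier G. \<forall>x \<in> carrier G. z \<otimes>\<^bsub>G\<^esub> x = x \<otimes>\<^bsub>G\<^esub> z}"

definition commutator_subgroup :: "('a, 'b) monoid_scheme \<Rightarrow> 'a set \<Rightarrow> 'a set \<Rightarrow> 'a set" where
  "commutator_subgroup G A B = generate G
     (\<Union>a \<in> A. \<Union>b \<in> B. {a \<otimes>\<^bsub>G\<^esub> b \<otimes>\<^bsub>G\<^esub> inv\<^bsub>G\<^esub> a \<otimes>\<^bsub>G\<^esub> inv\<^bsub>G\<^esub> b})"

text \<open>Lower central series: gamma_1 = G (index 0 here), gamma_{i+1} = [gamma_i, G].\<close>
fun lower_central :: "('a, 'b) monoid_scheme \<Rightarrow> nat \<Rightarrow> 'a set" where
  "lower_central G 0 = carrier G"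
| "lower_central G (Suc n) = commutator_subgroup G (lower_central G n) (carrier G)"

definition nilpotent_group :: "('a, 'b) monoid_scheme \<Rightarrow> bool" where
  "nilpotent_group G \<longleftrightarrow> group G \<and> (\<exists>n. lower_central G n = {\<one>\<^bsub>G\<^esub>})"

definition stem_extension :: "('h, 'c) monoid_scheme \<Rightarrow> ('g, 'd) monoid_scheme \<Rightarrow> ('h \<Rightarrow> 'g) \<Rightarrow> bool" where
  "stem_extension H G \<pi> \<longleftrightarrow> group H \<and> group G \<and> \<pi> \<in> hom H G \<and> \<pi> ` carrier H = carrier G \<and>
     kernel H G \<pi> \<subseteq> group_center H \<inter> derived H (carrier H)"

definition schur_cover :: "('h, 'c) monoid_scheme \<Rightarrow> ('g, 'd) monoid_scheme \<Rightarrow> ('h \<Rightarrow> 'g) \<Rightarrow> bool" where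
  "schur_cover H G \<pi> \<longleftrightarrow> stem_extension H G \<pi> \<and> finite (carrier H) \<and>
     (\<forall>(H' :: ('h, 'c) monoid_scheme) \<pi>'. stem_extension H' G \<pi>' \<longrightarrow>
        finite (carrier H') \<and> card (carrier H') \<le> card (carrier H))"

text \<open>Adjacency in the deep commuting graph Delta_D(G): distinct x, y whose preimages commute
  in every Schur cover (Schur covers are taken on carrier type nat, which suffices for
  finite groups).\<close>
definition deep_commuting_adj :: "('g, 'd) monoid_scheme \<Rightarrow> 'g \<Rightarrow> 'g \<Rightarrow> bool" where
  "deep_commuting_adj G x y \<longleftrightarrow> x \<in> carrier G \<and> y \<in> carrier G \<and> x \<noteq> y \<and>
     (\<forall>(H :: nat monoid) \<pi>. schur_cover H G \<pi> \<longrightarrow>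
        (\<forall>a \<in> carrier H. \<forall>b \<in> carrier H. \<pi> a = x \<longrightarrow> \<pi> b = y \<longrightarrow>
            a \<otimes>\<^bsub>H\<^esub> b = b \<otimes>\<^bsub>H\<^esub> a))"

definition finite_simple_graph :: "'v set \<Rightarrow> ('v \<Rightarrow> 'v \<Rightarrow> bool) \<Rightarrow> bool" where
  "finite_simple_graph V E \<longleftrightarrow> finite V \<and> (\<forall>u \<in> V. \<forall>v \<in> V. E u v \<longrightarrow> E v u) \<and> (\<forall>v \<in> V. \<not> E v v)"

definition induced_subgraph_embedding ::
  "'v set \<Rightarrow> ('v \<Rightarrow> 'v \<Rightarrow> bool) \<Rightarrow> 'w set \<Rightarrow> ('w \<Rightarrow> 'w \<Rightarrow> bool) \<Rightarrow> ('v \<Rightarrow> 'w) \<Rightarrow> bool" where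
  "induced_subgraph_embedding V E W A f \<longleftrightarrow> inj_on f V \<and> f ` V \<subseteq> W \<and>
     (\<forall>u \<in> V. \<forall>v \<in> V. u \<noteq> v \<longrightarrow> (E u v \<longleftrightarrow> A (f u) (f v)))"

end

theory Submission
  imports Defs "HOL-Library.Countable" "HOL-Computational_Algebra.Primes"
begin

(* Give every vertex u, and every ordered pair (u, v) of distinct non-adjacent vertices, its own
   prime, and let N be the product of all these primes. In the Heisenberg group over Z/N send u
   to the matrix with entries (a_u, b_u, 0), where a_u is the product of the primes of all labels
   other than u and the pairs (u, _), and b_u that of all labels other than the pairs (_, u).
   These two elements commute iff N divides a_u b_v - a_v b_u, which happens exactly for edges.
   Non-commuting elements are non-adjacent in the deep commuting graph, because lifts to a Schur
   cover cannot commute either. Commuting elements of coprime orders are adjacent, because in a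
   central extension the commutator of their lifts is central and killed by both orders. Finally
   a Schur cover exists, since the stem extensions of a group whose commutators are central have
   bounded order: their commutators depend only on the images, commute pairwise and have bounded
   order. *)

section \<open>Commutators\<close>

definition commutator :: "('a, 'b) monoid_scheme \<Rightarrow> 'a \<Rightarrow> 'a \<Rightarrow> 'a" where
  "commutator G x y = x \<otimes>\<^bsub>G\<^esub> y \<otimes>\<^bsub>G\<^esub> inv\<^bsub>G\<^esub> x \<otimes>\<^bsub>G\<^esub> inv\<^bsub>G\<^esub> y"

context group
begin

lemma inv_mult_cancel_left [simp]:
  "x \<in> carrier G \<Longrightarrow> y \<in> carrier G \<Longrightarrow> inv x \<otimes> (x \<otimes> y) = y"
  by (simp add: m_assoc[symmetric])

lemma mult_inv_cancel_left [simp]: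
  "x \<in> carrier G \<Longrightarrow> y \<in> carrier G \<Longrightarrow> x \<otimes> (inv x \<otimes> y) = y"
  by (simp add: m_assoc[symmetric])

lemma commutator_closed [simp]:
  "x \<in> carrier G \<Longrightarrow> y \<in> carrier G \<Longrightarrow> commutator G x y \<in> carrier G"
  by (simp add: commutator_def)

lemma conj_eq_commutator_mult:
  "x \<in> carrier G \<Longrightarrow> y \<in> carrier G \<Longrightarrow> x \<otimes> y \<otimes> inv x = commutator G x y \<otimes> y"
  by (simp add: commutator_def m_assoc)

lemma commutator_eq_one_iff:
  assumes "x \<in> carrier G" "y \<in> carrier G"
  shows "commutator G x y = \<one> \<longleftrightarrow> x \<otimes> y = y \<otimes> x"
proof -
  have "x \<otimes> y = commutator G x y \<otimes> (y \<otimes> x)"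
    using assms by (simp add: commutator_def m_assoc)
  then show ?thesis
    using assms by (metis commutator_closed l_one m_closed r_cancel_one)
qed

lemma commutator_swap:
  "x \<in> carrier G \<Longrightarrow> y \<in> carrier G \<Longrightarrow> commutator G y x = inv (commutator G x y)"
  by (simp add: commutator_def inv_mult_group m_assoc)

lemma commutator_mult_left:
  "x \<in> carrier G \<Longrightarrow> y \<in> carrier G \<Longrightarrow> z \<in> carrier G \<Longrightarrow>
    commutator G (x \<otimes> y) z = x \<otimes> commutator G y z \<otimes> inv x \<otimes> commutator G x z"
  by (simp add: commutator_def m_assoc inv_mult_group)

lemma conj_nat_pow:
  assumes "a \<in> carrier G" "x \<in> carrier G"
  shows "a \<otimes> x [^] (n::nat) \<otimes> inv a = (a \<otimes> x \<otimes> inv a) [^] n"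
proof (induction n)
  case (Suc n)
  have "a \<otimes> x [^] Suc n \<otimes> inv a = (a \<otimes> x [^] n \<otimes> inv a) \<otimes> (a \<otimes> x \<otimes> inv a)"
    using assms by (simp add: m_assoc)
  then show ?case
    using Suc by simp
qed (use assms in simp)

lemma group_centerD:
  assumes "z \<in> group_center G"
  shows "z \<in> carrier G" "x \<in> carrier G \<Longrightarrow> z \<otimes> x = x \<otimes> z"
  using assms by (auto simp: group_center_def)

lemma subgroup_group_center: "subgroup (group_center G) G"
proof (rule subgroupI)
  fix a b
  assume a: "a \<in> group_center G" and b: "b \<in> group_center G"
  note ab = group_centerD(1)[OF a] group_centerD(1)[OF b]
  have "a \<otimes> b \<otimes> x = x \<otimes> (a \<otimes> b)" if x: "x \<in> carrier G" for x
  proof -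
    have "a \<otimes> b \<otimes> x = a \<otimes> (x \<otimes> b)"
      using ab x by (simp add: group_centerD(2)[OF b] m_assoc)
    also have "\<dots> = (a \<otimes> x) \<otimes> b"
      using ab x by (simp add: m_assoc)
    also have "\<dots> = x \<otimes> (a \<otimes> b)"
      using ab x by (simp add: group_centerD(2)[OF a x] m_assoc)
    finally show ?thesis .
  qed
  then show "a \<otimes> b \<in> group_center G"
    using ab unfolding group_center_def by blast
  have "inv a \<otimes> x = x \<otimes> inv a" if x: "x \<in> carrier G" for x
  proof -
    have "inv a \<otimes> x = inv a \<otimes> (x \<otimes> a) \<otimes> inv a"
      using ab x by (simp add: m_assoc)
    also have "\<dots> = x \<otimes> inv a"
      using ab x by (simp add: group_centerD(2)[OF a x, symmetric] m_assoc[symmetric])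
    finally show ?thesis .
  qed
  then show "inv a \<in> group_center G"
    using ab unfolding group_center_def by blast
qed (auto simp: group_center_def)

lemma group_center_nat_pow: "z \<in> group_center G \<Longrightarrow> z [^] (n::nat) \<in> group_center G"
  using subgroup_group_center by (induction n) (auto intro: subgroup.m_closed subgroup.one_closed)

lemma commutator_group_center_left:
  "z \<in> group_center G \<Longrightarrow> x \<in> carrier G \<Longrightarrow> commutator G z x = \<one>"
  by (simp add: commutator_eq_one_iff group_centerD)

lemma commutator_group_center_right:
  "x \<in> carrier G \<Longrightarrow> z \<in> group_center G \<Longrightarrow> commutator G x z = \<one>"
  by (simp add: commutator_eq_one_iff group_centerD)

lemma commutator_mult_group_center_left:
  assumes "x \<in> carrier G" "y \<in> carrier G" "z \<in> group_center G"
  shows "commutator G (x \<otimes> z) y = commutator G x y"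
proof -
  have z: "z \<in> carrier G"
    using assms(3) by (rule group_centerD)
  have "commutator G (x \<otimes> z) y = x \<otimes> (z \<otimes> y) \<otimes> (inv z \<otimes> inv x) \<otimes> inv y"
    using assms z by (simp add: commutator_def inv_mult_group m_assoc)
  also have "\<dots> = x \<otimes> y \<otimes> (z \<otimes> (inv z \<otimes> inv x)) \<otimes> inv y"
    using assms z by (simp add: group_centerD(2)[OF assms(3) assms(2)] m_assoc)
  also have "\<dots> = commutator G x y"
    using assms z by (simp add: commutator_def)
  finally show ?thesis .
qed

lemma commutator_mult_group_center_right:
  assumes "x \<in> carrier G" "y \<in> carrier G" "z \<in> group_center G"
  shows "commutator G x (y \<otimes> z) = commutator G x y"
proof -
  have z: "z \<in> carrier G"
    using assms(3) by (rule group_centerD)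
  have "commutator G x (y \<otimes> z) = x \<otimes> y \<otimes> (z \<otimes> inv x) \<otimes> (inv z \<otimes> inv y)"
    using assms z by (simp add: commutator_def inv_mult_group m_assoc)
  also have "\<dots> = x \<otimes> y \<otimes> inv x \<otimes> (z \<otimes> (inv z \<otimes> inv y))"
    using assms z by (simp add: group_centerD(2)[OF assms(3) inv_closed[OF assms(1)]] m_assoc)
  also have "\<dots> = commutator G x y"
    using assms z by (simp add: commutator_def)
  finally show ?thesis .
qed

lemma commutator_mult_right_group_center:
  assumes c: "c \<in> carrier G" and xy: "x \<in> carrier G" "y \<in> carrier G"
    and central: "commutator G c y \<in> group_center G"
  shows "commutator G c (x \<otimes> y) = commutator G c x \<otimes> commutator G c y"
proof -
  have "commutator G c (x \<otimes> y) = (c \<otimes> x \<otimes> inv c) \<otimes> commutator G c y \<otimes> inv x"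
    using c xy by (simp add: commutator_def m_assoc inv_mult_group)
  also have "\<dots> = commutator G c y \<otimes> ((c \<otimes> x \<otimes> inv c) \<otimes> inv x)"
    using c xy group_centerD(2)[OF central, of "c \<otimes> x \<otimes> inv c"] by (simp add: m_assoc[symmetric])
  also have "\<dots> = commutator G c y \<otimes> commutator G c x"
    using c xy by (simp add: commutator_def m_assoc)
  also have "\<dots> = commutator G c x \<otimes> commutator G c y"
    using c xy by (simp add: group_centerD(2)[OF central])
  finally show ?thesis .
qed

lemma commutator_nat_pow_right:
  assumes c: "c \<in> carrier G" and x: "x \<in> carrier G"
    and central: "\<forall>y\<in>carrier G. commutator G c y \<in> group_center G"
  shows "commutator G c (x [^] (n::nat)) = commutator G c x [^] n"
proof (induction n)
  case (Suc n)
  then show ?case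
    using c x central by (simp add: commutator_mult_right_group_center)
qed (use c in \<open>simp add: commutator_def\<close>)

lemma commutator_inv_right:
  assumes c: "c \<in> carrier G" and x: "x \<in> carrier G"
    and central: "\<forall>y\<in>carrier G. commutator G c y \<in> group_center G"
  shows "commutator G c (inv x) = inv (commutator G c x)"
proof -
  have "commutator G c (inv x) \<otimes> commutator G c x = commutator G c (inv x \<otimes> x)"
    using c x central by (intro commutator_mult_right_group_center[symmetric]) auto
  also have "\<dots> = \<one>"
    using c x by (simp add: commutator_def)
  finally show ?thesis
    using c x by (simp add: inv_equality)
qed

text \<open>If the commutators with \<open>c\<close> are central, then \<open>y \<mapsto> [c, y]\<close> is a homomorphism
  into an abelian group, so it kills all commutators.\<close>
lemma commutator_commutator_eq_one:
  assumes c: "c \<in> carrier G" and ab: "a \<in> carrier G" "b \<in> carrier G"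
    and central: "\<forall>y\<in>carrier G. commutator G c y \<in> group_center G"
  shows "commutator G c (commutator G a b) = \<one>"
proof -
  have hom: "commutator G c (x \<otimes> y) = commutator G c x \<otimes> commutator G c y"
    if "x \<in> carrier G" "y \<in> carrier G" for x y
    using that c central by (simp add: commutator_mult_right_group_center)
  have "commutator G c (commutator G a b) = commutator G c a \<otimes> commutator G c b
      \<otimes> commutator G c (inv a) \<otimes> commutator G c (inv b)"
    unfolding commutator_def[of G a b] using ab c by (simp add: hom)
  also have "\<dots> = commutator G (commutator G c a) (commutator G c b)"
    using ab c central by (simp add: commutator_inv_right commutator_def[of G "commutator G c a"])
  also have "\<dots> = \<one>"
    using ab c central by (simp add: commutator_group_center_right)
  finally show ?thesis .
qed

lemma commutator_nat_pow_left:
  fixes k :: nat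
  assumes a: "a \<in> carrier G" and b: "b \<in> carrier G"
    and d_center: "commutator G a (commutator G a b) \<in> group_center G"
  shows "\<exists>j::nat. commutator G (a [^] k) b =
    commutator G a b [^] k \<otimes> commutator G a (commutator G a b) [^] j"
proof (induction k)
  case 0
  show ?case
    using b by (intro exI[of _ 0]) (simp add: commutator_def)
next
  case (Suc k)
  define c where "c = commutator G a b"
  define d where "d = commutator G a c"
  have c: "c \<in> carrier G" and d: "d \<in> carrier G"
    using a b d_center by (simp_all add: c_def d_def group_centerD)
  obtain j :: nat where j: "commutator G (a [^] k) b = c [^] k \<otimes> d [^] j"
    using Suc by (auto simp: c_def d_def)
  have dj: "d [^] j \<in> group_center G"
    using d_center by (simp add: group_center_nat_pow c_def d_def)
  have "commutator G (a [^] Suc k) b = commutator G (a \<otimes> a [^] k) b"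
    using a by (simp only: nat_pow_Suc2)
  also have "\<dots> = a \<otimes> (c [^] k \<otimes> d [^] j) \<otimes> inv a \<otimes> c"
    using a b by (simp add: commutator_mult_left j c_def)
  also have "\<dots> = (a \<otimes> c [^] k \<otimes> inv a) \<otimes> c \<otimes> d [^] j"
    using a c d group_centerD(2)[OF dj, of "inv a"] group_centerD(2)[OF dj c]
    by (simp add: m_assoc)
  also have "\<dots> = d [^] k \<otimes> c [^] k \<otimes> c \<otimes> d [^] j"
    using a c d group_centerD(2)[OF d_center c, folded c_def d_def, symmetric]
      conj_eq_commutator_mult[OF a c, folded d_def]
    by (simp add: conj_nat_pow pow_mult_distrib)
  also have "\<dots> = c [^] Suc k \<otimes> d [^] (k + j)"
    using c d group_centerD(2)[OF group_center_nat_pow[OF d_center, folded c_def d_def, of k],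
        of "c [^] Suc k"]
    by (simp add: m_assoc nat_pow_mult[symmetric])
  finally show ?case
    unfolding c_def d_def by blast
qed

text \<open>With \<open>c = [a, b]\<close> and \<open>d = [a, c]\<close> central, \<open>[a\<^sup>n, b] = c\<^sup>n d\<^sup>j\<close> for some \<open>j\<close>, and
  \<open>d\<^sup>n = [a\<^sup>n, c] = 1\<close>; so if \<open>a\<^sup>n\<close> is central then \<open>c\<^sup>n\<close> is a power of \<open>d\<close>.\<close>
lemma commutator_nat_pow_eq_one:
  assumes a: "a \<in> carrier G" and b: "b \<in> carrier G"
    and central: "\<forall>y\<in>carrier G. commutator G (commutator G a b) y \<in> group_center G"
    and a_pow: "a [^] (n::nat) \<in> group_center G"
  shows "commutator G a b [^] (n * n) = \<one>"
proof -
  define c where "c = commutator G a b"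
  define d where "d = commutator G a c"
  have c: "c \<in> carrier G"
    using a b by (simp add: c_def)
  have central': "\<forall>y\<in>carrier G. commutator G c y \<in> group_center G"
    using central by (simp add: c_def)
  have d_center: "d \<in> group_center G"
    using central' a c subgroup.m_inv_closed[OF subgroup_group_center]
    by (simp add: d_def commutator_swap[OF c a])
  have d: "d \<in> carrier G"
    using d_center by (rule group_centerD)
  have "d [^] n = inv (commutator G c (a [^] n))"
    using a c
    by (simp add: d_def commutator_swap[OF c a] commutator_nat_pow_right[OF c a central']
        nat_pow_inv)
  then have d_pow: "d [^] n = \<one>"
    using commutator_group_center_right[OF c a_pow] by simp
  obtain j :: nat where "commutator G (a [^] n) b = c [^] n \<otimes> d [^] j"
    using commutator_nat_pow_left[OF a b] d_center by (auto simp: c_def d_def)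
  then have "c [^] n \<otimes> d [^] j = \<one>"
    using b a_pow by (simp add: commutator_group_center_left)
  then have "c [^] n = inv (d [^] j)"
    using c d by (simp add: inv_equality[symmetric] inv_comm)
  then have "(c [^] n) [^] n = inv ((d [^] n) [^] j)"
    using d by (simp add: nat_pow_inv nat_pow_pow mult.commute)
  then show ?thesis
    using c d_pow by (simp add: c_def[symmetric] nat_pow_pow)
qed

text \<open>The central commutator \<open>k = [a, b]\<close> is killed by \<open>m'\<close>, since conjugation by \<open>a\<close> fixes
  the central power \<open>b\<^sup>m\<^sup>'\<close> and maps it to \<open>(k b)\<^sup>m\<^sup>' = k\<^sup>m\<^sup>' b\<^sup>m\<^sup>'\<close>; likewise it is killed
  by \<open>m\<close>.\<close>
lemma commute_if_coprime_central_powers: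
  assumes a: "a \<in> carrier G" and b: "b \<in> carrier G"
    and ab_center: "commutator G a b \<in> group_center G"
    and a_pow: "a [^] (m::nat) \<in> group_center G" and b_pow: "b [^] (m'::nat) \<in> group_center G"
    and coprime: "coprime m m'"
  shows "a \<otimes> b = b \<otimes> a"
proof -
  define k where "k = commutator G a b"
  have k: "k \<in> carrier G"
    using a b by (simp add: k_def)
  have inv_k_center: "inv k \<in> group_center G"
    using ab_center subgroup.m_inv_closed[OF subgroup_group_center] by (simp add: k_def)
  have fix_center: "g \<otimes> z \<otimes> inv g = z" if "g \<in> carrier G" "z \<in> group_center G" for g z
    using that group_centerD(1)[OF that(2)]
    by (simp add: group_centerD(2)[OF that(2) that(1), symmetric] m_assoc)
  have power_kills: "z [^] n = \<one>"
    if z: "z \<in> group_center G" and x: "x \<in> carrier G" and eq: "x [^] n = (z \<otimes> x) [^] n"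
    for z x and n :: nat
  proof -
    have "x [^] n = z [^] n \<otimes> x [^] n"
      using eq group_centerD(1)[OF z] x by (simp add: pow_mult_distrib group_centerD(2)[OF z x])
    then show ?thesis
      using group_centerD(1)[OF z] x by simp
  qed
  have "b [^] m' = a \<otimes> b [^] m' \<otimes> inv a"
    using fix_center[OF a b_pow] by simp
  also have "\<dots> = (k \<otimes> b) [^] m'"
    by (simp only: conj_nat_pow[OF a b] conj_eq_commutator_mult[OF a b] k_def)
  finally have k_pow_m': "k [^] m' = \<one>"
    using power_kills ab_center b by (simp add: k_def)
  have "a [^] m = b \<otimes> a [^] m \<otimes> inv b"
    using fix_center[OF b a_pow] by simp
  also have "\<dots> = (inv k \<otimes> a) [^] m"
    by (simp only: conj_nat_pow[OF b a] conj_eq_commutator_mult[OF b a] commutator_swap[OF a b]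
        k_def)
  finally have "inv k [^] m = \<one>"
    using power_kills inv_k_center a by simp
  then have "k [^] m = \<one>"
    using k by (simp add: nat_pow_inv)
  then have "ord k dvd m" "ord k dvd m'"
    using k k_pow_m' by (simp_all add: pow_eq_id)
  then have "k = \<one>"
    using k coprime by (metis coprime_common_divisor_nat ord_eq_1)
  then show ?thesis
    using a b by (simp add: k_def commutator_eq_one_iff)
qed

lemma derived_setE:
  assumes "s \<in> derived_set G (carrier G)"
  obtains a b where "a \<in> carrier G" "b \<in> carrier G" "s = commutator G a b"
  using assms unfolding commutator_def by blast

lemma generate_commute:
  assumes s: "s \<in> carrier G" and S: "S \<subseteq> carrier G" and comm: "\<forall>t\<in>S. t \<otimes> s = s \<otimes> t"
    and x: "x \<in> generate G S"
  shows "x \<otimes> s = s \<otimes> x"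
  using x
proof (induction rule: generate.induct)
  case (inv h)
  have h: "h \<in> carrier G"
    using inv S by blast
  have "inv h \<otimes> s = inv h \<otimes> (s \<otimes> h) \<otimes> inv h"
    using h s by (simp add: m_assoc)
  also have "\<dots> = inv h \<otimes> (h \<otimes> s) \<otimes> inv h"
    using inv comm by simp
  also have "\<dots> = s \<otimes> inv h"
    using h s by simp
  finally show ?case .
next
  case (eng h1 h2)
  have "h1 \<in> carrier G" "h2 \<in> carrier G"
    using eng.hyps S generate_in_carrier by auto
  then show ?case
    using s eng.IH by (metis m_assoc)
qed (use s comm in auto)

lemma generate_insert_subset:
  assumes s: "s \<in> carrier G" "s [^] (e::nat) = \<one>" "e > 0" and S: "S \<subseteq> carrier G"
    and comm: "\<forall>t\<in>S. t \<otimes> s = s \<otimes> t"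
  shows "generate G (insert s S) \<subseteq> (\<lambda>(k, x). s [^] k \<otimes> x) ` ({..<e} \<times> generate G S)"
    (is "_ \<subseteq> ?R")
proof
  have gen_S: "generate G S \<subseteq> carrier G"
    using S generate_in_carrier by blast
  have R: "s [^] k \<otimes> x \<in> ?R" if x: "x \<in> generate G S" for x and k :: nat
  proof (rule image_eqI)
    have "s [^] k = (s [^] e) [^] (k div e) \<otimes> s [^] (k mod e)"
      using s(1) by (simp add: nat_pow_pow nat_pow_mult)
    then show "s [^] k \<otimes> x = (\<lambda>(k, x). s [^] k \<otimes> x) (k mod e, x)"
      using s by simp
    show "(k mod e, x) \<in> {..<e} \<times> generate G S"
      using x \<open>e > 0\<close> by simp
  qed
  have gen_S_R: "x \<in> ?R" if "x \<in> generate G S" for x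
    using R[OF that, of 0] subsetD[OF gen_S that] by simp
  have pow_R: "s [^] k \<in> ?R" for k :: nat
    using R[OF generate.one, of k] s(1) by simp
  have inv_s: "inv s = s [^] (e - 1)"
    using s by (intro inv_equality) (simp_all add: nat_pow_Suc[symmetric])
  fix y
  assume "y \<in> generate G (insert s S)"
  then show "y \<in> ?R"
  proof (induction rule: generate.induct)
    case one
    then show ?case
      using gen_S_R generate.one by blast
  next
    case (incl h)
    then show ?case
      using pow_R[of 1] s(1) gen_S_R generate.incl[of h S] by (cases "h = s") auto
  next
    case (inv h)
    then show ?case
      using pow_R[of "e - 1"] inv_s gen_S_R generate.inv[of h S] by (cases "h = s") auto
  next
    case (eng h1 h2)
    then obtain x1 x2 and k1 k2 :: nat where x: "x1 \<in> generate G S" "x2 \<in> generate G S"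
      and h: "h1 = s [^] k1 \<otimes> x1" "h2 = s [^] k2 \<otimes> x2"
      by fastforce
    have x_carrier: "x1 \<in> carrier G" "x2 \<in> carrier G"
      using x gen_S by auto
    have "x1 \<otimes> s [^] k2 = s [^] k2 \<otimes> x1"
      using generate_commute[OF s(1) S comm x(1)] x_carrier s(1)
      by (intro group_commutes_pow[symmetric]) simp_all
    have "h1 \<otimes> h2 = s [^] k1 \<otimes> ((x1 \<otimes> s [^] k2) \<otimes> x2)"
      using h x_carrier s(1) by (simp add: m_assoc)
    also have "\<dots> = s [^] k1 \<otimes> ((s [^] k2 \<otimes> x1) \<otimes> x2)"
      by (simp only: \<open>x1 \<otimes> s [^] k2 = s [^] k2 \<otimes> x1\<close>)
    also have "\<dots> = s [^] (k1 + k2) \<otimes> (x1 \<otimes> x2)"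
      using x_carrier s(1) by (simp add: m_assoc[symmetric] nat_pow_mult)
    finally show ?case
      using R generate.eng[OF x] by simp
  qed
qed

lemma finite_card_generate_commuting_le:
  assumes "finite S" "S \<subseteq> carrier G" "\<forall>s\<in>S. \<forall>t\<in>S. s \<otimes> t = t \<otimes> s"
    "\<forall>s\<in>S. s [^] (e::nat) = \<one>" "e > 0"
  shows "finite (generate G S) \<and> card (generate G S) \<le> e ^ card S"
  using assms
proof (induction S rule: finite_induct)
  case empty
  then show ?case
    by (simp add: generate_empty)
next
  case (insert s S)
  let ?R = "(\<lambda>(k, x). s [^] k \<otimes> x) ` ({..<e} \<times> generate G S)"
  have S: "S \<subseteq> carrier G" "\<forall>s\<in>S. \<forall>t\<in>S. s \<otimes> t = t \<otimes> s" "\<forall>s\<in>S. s [^] e = \<one>"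
    and s: "s \<in> carrier G" "s [^] e = \<one>" and comm: "\<forall>t\<in>S. t \<otimes> s = s \<otimes> t"
    using insert.prems(1-3) by blast+
  then have IH: "finite (generate G S)" "card (generate G S) \<le> e ^ card S"
    using insert.IH insert.prems(4) by blast+
  have sub: "generate G (insert s S) \<subseteq> ?R"
    using s insert.prems(4) S(1) comm by (rule generate_insert_subset)
  have "card ?R \<le> card ({..<e} \<times> generate G S)"
    using IH by (intro card_image_le) simp
  also have "\<dots> = e * card (generate G S)"
    by (simp add: card_cartesian_product)
  also have "\<dots> \<le> e * e ^ card S"
    using IH by simp
  also have "\<dots> \<le> e ^ card (insert s S)"
    using IH insert.hyps by simp
  finally have "card ?R \<le> e ^ card (insert s S)" .
  moreover have "finite ?R"
    using IH by simp
  ultimately show ?case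
    using sub card_mono finite_subset order_trans by meson
qed

end

section \<open>Central extensions and Schur covers\<close>

definition commutators_central :: "('a, 'b) monoid_scheme \<Rightarrow> bool" where
  "commutators_central G \<longleftrightarrow>
     (\<forall>x\<in>carrier G. \<forall>y\<in>carrier G. commutator G x y \<in> group_center G)"

lemma (in group) nilpotent_if_commutators_central:
  assumes "commutators_central G"
  shows "nilpotent_group G"
proof -
  have commutators_eq: "(\<Union>a\<in>A. \<Union>b\<in>carrier G. {a \<otimes> b \<otimes> inv a \<otimes> inv b}) =
      (\<lambda>(a, b). commutator G a b) ` (A \<times> carrier G)" for A
    by (auto simp: commutator_def)
  have lower_central_Suc: "lower_central G (Suc n) =
      generate G ((\<lambda>(a, b). commutator G a b) ` (lower_central G n \<times> carrier G))" for n
    by (simp only: lower_central.simps(2) commutator_subgroup_def commutators_eq)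
  have "lower_central G 1 \<subseteq> group_center G"
    unfolding One_nat_def lower_central_Suc lower_central.simps(1)
    by (rule generate_subgroup_incl[OF _ subgroup_group_center])
      (use assms in \<open>auto simp: commutators_central_def\<close>)
  moreover have "\<one> \<in> lower_central G 1"
    unfolding One_nat_def lower_central_Suc by (rule generate.one)
  ultimately have "(\<lambda>(a, b). commutator G a b) ` (lower_central G 1 \<times> carrier G) = {\<one>}"
    by (force simp: commutator_group_center_left)
  then have "lower_central G 2 = {\<one>}"
    unfolding numeral_2_eq_2 lower_central_Suc One_nat_def[symmetric] by (simp add: generate_one)
  then show ?thesis
    unfolding nilpotent_group_def using is_group by blast
qed

context group_hom
begin

lemma hom_commutator:
  "x \<in> carrier G \<Longrightarrow> y \<in> carrier G \<Longrightarrow> h (commutator G x y) = commutator H (h x) (h y)"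
  by (simp add: commutator_def)

lemma kernel_group_centerI:
  "kernel G H h \<subseteq> group_center G \<Longrightarrow> x \<in> carrier G \<Longrightarrow> h x = \<one>\<^bsub>H\<^esub> \<Longrightarrow> x \<in> group_center G"
  by (auto simp: kernel_def)

lemma inv_lift_mult_in_kernel:
  assumes "x \<in> carrier G"
  shows "inv (inv_into (carrier G) h (h x)) \<otimes> x \<in> kernel G H h"
proof -
  have "inv_into (carrier G) h (h x) \<in> carrier G" "h (inv_into (carrier G) h (h x)) = h x"
    using assms by (auto intro: inv_into_into f_inv_into_f)
  then show ?thesis
    using assms by (simp add: kernel_def)
qed

lemma finite_card_le_card_image_mult_card_kernel:
  assumes "finite (h ` carrier G)" "finite (kernel G H h)"
  shows "finite (carrier G) \<and> card (carrier G) \<le> card (h ` carrier G) * card (kernel G H h)"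
proof -
  define L where "L = inv_into (carrier G) h"
  define P where "P = (\<lambda>(y, k). L y \<otimes> k) ` (h ` carrier G \<times> kernel G H h)"
  have "carrier G \<subseteq> P"
  proof
    fix x
    assume x: "x \<in> carrier G"
    have "L (h x) \<in> carrier G"
      using x by (auto simp: L_def intro: inv_into_into)
    then have "x = L (h x) \<otimes> (inv (L (h x)) \<otimes> x)"
      using x by simp
    then show "x \<in> P"
      unfolding P_def using x inv_lift_mult_in_kernel[OF x]
      by (intro image_eqI[of _ _ "(h x, inv (L (h x)) \<otimes> x)"]) (auto simp: L_def)
  qed
  moreover have "finite P" "card P \<le> card (h ` carrier G) * card (kernel G H h)"
    using assms unfolding P_def
    by (auto intro: card_image_le[THEN order_trans] simp: card_cartesian_product)
  ultimately show ?thesis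
    by (meson card_mono finite_subset order_trans)
qed

lemma finite_card_derived_set_if_central_kernel:
  assumes central: "kernel G H h \<subseteq> group_center G" and fin: "finite (h ` carrier G)"
  shows "finite (derived_set G (carrier G)) \<and>
    card (derived_set G (carrier G)) \<le> card (h ` carrier G) ^ 2"
proof -
  define L where "L = inv_into (carrier G) h"
  have L_closed: "L (h x) \<in> carrier G" if "x \<in> carrier G" for x
    using that by (auto simp: L_def intro: inv_into_into)
  have L_center: "inv (L (h x)) \<otimes> x \<in> group_center G" if "x \<in> carrier G" for x
    using central inv_lift_mult_in_kernel[OF that] unfolding L_def by blast
  have commutator_lifts: "commutator G x y = commutator G (L (h x)) (L (h y))"
    if x: "x \<in> carrier G" and y: "y \<in> carrier G" for x y
  proof -
    have "commutator G x y = commutator G (L (h x) \<otimes> (inv (L (h x)) \<otimes> x))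
        (L (h y) \<otimes> (inv (L (h y)) \<otimes> y))"
      using x y L_closed by simp
    also have "\<dots> = commutator G (L (h x)) (L (h y) \<otimes> (inv (L (h y)) \<otimes> y))"
      by (rule G.commutator_mult_group_center_left) (use x y L_closed L_center in auto)
    also have "\<dots> = commutator G (L (h x)) (L (h y))"
      by (rule G.commutator_mult_group_center_right) (use x y L_closed L_center in auto)
    finally show ?thesis .
  qed
  have "derived_set G (carrier G) \<subseteq>
      (\<lambda>(u, v). commutator G (L u) (L v)) ` (h ` carrier G \<times> h ` carrier G)"
    by (auto simp: commutator_def[symmetric] commutator_lifts)
  moreover have "card ((\<lambda>(u, v). commutator G (L u) (L v)) ` (h ` carrier G \<times> h ` carrier G))
      \<le> card (h ` carrier G) ^ 2"
    using fin
    by (auto intro: card_image_le[THEN order_trans] simp: card_cartesian_product power2_eq_square)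
  ultimately show ?thesis
    using fin by (meson card_mono finite_SigmaI finite_imageI finite_subset order_trans)
qed

lemma commutator_commutator_in_center:
  assumes central: "kernel G H h \<subseteq> group_center G" and H_central: "commutators_central H"
    and abx: "a \<in> carrier G" "b \<in> carrier G" "x \<in> carrier G"
  shows "commutator G (commutator G a b) x \<in> group_center G"
proof (rule kernel_group_centerI[OF central])
  have "commutator H (h a) (h b) \<in> group_center H"
    using H_central abx by (simp add: commutators_central_def)
  then show "h (commutator G (commutator G a b) x) = \<one>\<^bsub>H\<^esub>"
    using abx by (simp add: hom_commutator H.commutator_group_center_left)
qed (use abx in simp)

lemma nat_pow_order_in_center:
  assumes central: "kernel G H h \<subseteq> group_center G" and fin: "finite (carrier H)"
    and x: "x \<in> carrier G"
  shows "x [^] order H \<in> group_center G"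
  using x fin
  by (intro kernel_group_centerI[OF central]) (simp_all add: hom_nat_pow H.pow_order_eq_1)

lemma derived_set_commute:
  assumes central: "kernel G H h \<subseteq> group_center G" and H_central: "commutators_central H"
    and st: "s \<in> derived_set G (carrier G)" "t \<in> derived_set G (carrier G)"
  shows "s \<otimes> t = t \<otimes> s"
proof -
  obtain a b where ab: "a \<in> carrier G" "b \<in> carrier G" "s = commutator G a b"
    using st(1) by (rule G.derived_setE)
  obtain a' b' where ab': "a' \<in> carrier G" "b' \<in> carrier G" "t = commutator G a' b'"
    using st(2) by (rule G.derived_setE)
  have "commutator G s t = \<one>"
    using ab ab' commutator_commutator_in_center[OF central H_central ab(1,2)]
    by (simp add: G.commutator_commutator_eq_one)
  then show ?thesis
    using ab ab' by (simp add: G.commutator_eq_one_iff)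
qed

lemma derived_set_nat_pow_eq_one:
  assumes central: "kernel G H h \<subseteq> group_center G" and H_central: "commutators_central H"
    and fin: "finite (carrier H)" and s: "s \<in> derived_set G (carrier G)"
  shows "s [^] (order H ^ 2) = \<one>"
proof -
  obtain a b where ab: "a \<in> carrier G" "b \<in> carrier G" "s = commutator G a b"
    using s by (rule G.derived_setE)
  show ?thesis
    unfolding ab(3) power2_eq_square
    using G.commutator_nat_pow_eq_one[OF ab(1,2) _ nat_pow_order_in_center[OF central fin ab(1)]]
      commutator_commutator_in_center[OF central H_central ab(1,2)] by blast
qed

text \<open>The derived subgroup is generated by at most \<open>n\<^sup>2\<close> pairwise commuting commutators,
  each of order dividing \<open>n\<^sup>2\<close>, where \<open>n\<close> is the order of \<open>H\<close>.\<close>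
lemma finite_card_derived_le:
  assumes central: "kernel G H h \<subseteq> group_center G" and H_central: "commutators_central H"
    and fin: "finite (carrier H)"
  shows "finite (derived G (carrier G)) \<and>
    card (derived G (carrier G)) \<le> (order H ^ 2) ^ (order H ^ 2)"
proof -
  let ?C = "derived_set G (carrier G)"
  have n_pos: "order H > 0"
    using fin by (auto simp: order_def card_gt_0_iff)
  have "h ` carrier G \<subseteq> carrier H"
    by auto
  then have image: "finite (h ` carrier G)" "card (h ` carrier G) \<le> order H"
    unfolding order_def using fin by (auto intro: card_mono finite_subset)
  then have C: "finite ?C" "card ?C \<le> order H ^ 2"
    using finite_card_derived_set_if_central_kernel[OF central image(1)]
    by (auto intro: order_trans power_mono)
  have sub: "?C \<subseteq> carrier G"
    by (simp add: G.derived_set_in_carrier)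
  have comm: "\<forall>s\<in>?C. \<forall>t\<in>?C. s \<otimes> t = t \<otimes> s"
    using derived_set_commute[OF central H_central] by blast
  have exp: "\<forall>s\<in>?C. s [^] (order H ^ 2) = \<one>"
    using derived_set_nat_pow_eq_one[OF central H_central fin] by blast
  have "finite (derived G (carrier G)) \<and>
      card (derived G (carrier G)) \<le> (order H ^ 2) ^ card ?C"
    unfolding derived_def using n_pos
    by (intro G.finite_card_generate_commuting_le[OF C(1) sub comm exp]) simp
  moreover have "(order H ^ 2) ^ card ?C \<le> (order H ^ 2) ^ (order H ^ 2)"
    using C(2) n_pos by (intro power_increasing) simp_all
  ultimately show ?thesis
    by auto
qed

end

lemma (in group) stem_extension_id: "stem_extension G G id"
proof -
  have "kernel G G id = {\<one>}"
    by (auto simp: kernel_def)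
  moreover have "\<one> \<in> group_center G" "\<one> \<in> derived G (carrier G)"
    by (simp_all add: subgroup.one_closed[OF subgroup_group_center] derived_def generate.one)
  ultimately show ?thesis
    unfolding stem_extension_def using is_group by (auto simp: hom_def)
qed

lemma stem_extension_card_le:
  assumes stem: "stem_extension E G \<pi>" and fin: "finite (carrier G)"
    and G_central: "commutators_central G"
  shows "finite (carrier E) \<and> card (carrier E) \<le> order G * (order G ^ 2) ^ (order G ^ 2)"
proof -
  interpret group_hom E G \<pi>
    using stem by (simp add: stem_extension_def group_hom_def group_hom_axioms_def)
  have surj: "\<pi> ` carrier E = carrier G" and central: "kernel E G \<pi> \<subseteq> group_center E"
    and kernel_derived: "kernel E G \<pi> \<subseteq> derived E (carrier E)"
    using stem by (auto simp: stem_extension_def)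
  note derived = finite_card_derived_le[OF central G_central fin]
  have kernel: "finite (kernel E G \<pi>)" "card (kernel E G \<pi>) \<le> (order G ^ 2) ^ (order G ^ 2)"
    using finite_subset[OF kernel_derived] card_mono[OF _ kernel_derived] derived
    by (meson order_trans)+
  have "finite (carrier E)" "card (carrier E) \<le> order G * card (kernel E G \<pi>)"
    using finite_card_le_card_image_mult_card_kernel[OF _ kernel(1)] fin surj
    by (simp_all add: order_def)
  then show ?thesis
    using kernel(2) by (meson mult_le_mono2 order_trans)
qed

lemma schur_cover_exists:
  fixes G :: "('a, 'b) monoid_scheme"
  assumes "group G"
    and bounded: "\<And>(E :: ('a, 'b) monoid_scheme) \<pi>. stem_extension E G \<pi> \<Longrightarrow>
      finite (carrier E) \<and> card (carrier E) \<le> B"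
  shows "\<exists>(E :: ('a, 'b) monoid_scheme) \<pi>. schur_cover E G \<pi>"
proof -
  define P where "P = (\<lambda>(E :: ('a, 'b) monoid_scheme, \<pi> :: 'a \<Rightarrow> 'a). stem_extension E G \<pi>)"
  define extension_card
    where "extension_card = (\<lambda>(E :: ('a, 'b) monoid_scheme, \<pi> :: 'a \<Rightarrow> 'a). card (carrier E))"
  have "P (G, id)"
    using group.stem_extension_id[OF \<open>group G\<close>] by (simp add: P_def)
  moreover have "\<forall>y. P y \<longrightarrow> extension_card y < Suc B"
    using bounded by (auto simp: P_def extension_card_def le_imp_less_Suc)
  ultimately have "\<exists>p. P p \<and> (\<forall>y. P y \<longrightarrow> extension_card y \<le> extension_card p)"
    by (rule ex_has_greatest_nat)
  then obtain p where "P p" and greatest: "\<forall>y. P y \<longrightarrow> extension_card y \<le> extension_card p"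
    by blast
  obtain E \<pi> where p: "p = (E, \<pi>)"
    by (cases p)
  have stem: "stem_extension E G \<pi>"
    using \<open>P p\<close> by (simp add: P_def p)
  have "card (carrier E') \<le> card (carrier E)" if "stem_extension E' G \<pi>'"
    for E' :: "('a, 'b) monoid_scheme" and \<pi>'
    using greatest[rule_format, of "(E', \<pi>')"] that by (simp add: P_def extension_card_def p)
  then have "schur_cover E G \<pi>"
    unfolding schur_cover_def using stem bounded by blast
  then show ?thesis
    by blast
qed

lemma deep_commuting_adj_imp_commute:
  assumes cover: "schur_cover (E :: nat monoid) G \<pi>" and adj: "deep_commuting_adj G x y"
  shows "x \<otimes>\<^bsub>G\<^esub> y = y \<otimes>\<^bsub>G\<^esub> x"
proof -
  have hom: "\<pi> \<in> hom E G" and surj: "\<pi> ` carrier E = carrier G"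
    using cover by (auto simp: schur_cover_def stem_extension_def)
  have "x \<in> carrier G" "y \<in> carrier G"
    and lifts_commute: "\<forall>a\<in>carrier E. \<forall>b\<in>carrier E. \<pi> a = x \<longrightarrow> \<pi> b = y \<longrightarrow>
      a \<otimes>\<^bsub>E\<^esub> b = b \<otimes>\<^bsub>E\<^esub> a"
    using adj cover unfolding deep_commuting_adj_def by blast+
  then obtain a b where ab: "a \<in> carrier E" "b \<in> carrier E" and lifts: "\<pi> a = x" "\<pi> b = y"
    using surj by (metis imageE)
  have "x \<otimes>\<^bsub>G\<^esub> y = \<pi> (a \<otimes>\<^bsub>E\<^esub> b)"
    using hom ab lifts by (simp add: hom_mult)
  also have "\<dots> = \<pi> (b \<otimes>\<^bsub>E\<^esub> a)"
    using lifts_commute ab lifts by metis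
  also have "\<dots> = y \<otimes>\<^bsub>G\<^esub> x"
    using hom ab lifts by (simp add: hom_mult)
  finally show ?thesis .
qed

lemma deep_commuting_adj_if_coprime_orders:
  assumes xy: "x \<in> carrier G" "y \<in> carrier G" "x \<noteq> y"
    and comm: "x \<otimes>\<^bsub>G\<^esub> y = y \<otimes>\<^bsub>G\<^esub> x"
    and orders: "x [^]\<^bsub>G\<^esub> (m::nat) = \<one>\<^bsub>G\<^esub>" "y [^]\<^bsub>G\<^esub> (m'::nat) = \<one>\<^bsub>G\<^esub>"
    and coprime: "coprime m m'"
  shows "deep_commuting_adj G x y"
  unfolding deep_commuting_adj_def
proof (intro conjI allI impI ballI xy)
  fix E :: "nat monoid" and \<pi> a b
  assume cover: "schur_cover E G \<pi>" and ab: "a \<in> carrier E" "b \<in> carrier E"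
    and lifts: "\<pi> a = x" "\<pi> b = y"
  interpret group_hom E G \<pi>
    using cover by (simp add: schur_cover_def stem_extension_def group_hom_def group_hom_axioms_def)
  have central: "kernel E G \<pi> \<subseteq> group_center E"
    using cover by (simp add: schur_cover_def stem_extension_def)
  show "a \<otimes>\<^bsub>E\<^esub> b = b \<otimes>\<^bsub>E\<^esub> a"
  proof (rule G.commute_if_coprime_central_powers[OF ab _ _ _ coprime])
    show "commutator E a b \<in> group_center E"
      using ab lifts comm xy
      by (intro kernel_group_centerI[OF central])
        (simp_all add: hom_commutator H.commutator_eq_one_iff)
    show "a [^]\<^bsub>E\<^esub> m \<in> group_center E" "b [^]\<^bsub>E\<^esub> m' \<in> group_center E"
      using ab lifts orders by (auto intro!: kernel_group_centerI[OF central] simp: hom_nat_pow)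
  qed
qed

lemma induced_subgraph_embedding_deep_commuting:
  assumes cover: "schur_cover (C :: nat monoid) G \<pi>"
    and f: "f ` V \<subseteq> carrier G" "inj_on f V"
    and commute_iff: "\<And>u v. u \<in> V \<Longrightarrow> v \<in> V \<Longrightarrow> u \<noteq> v \<Longrightarrow>
      f u \<otimes>\<^bsub>G\<^esub> f v = f v \<otimes>\<^bsub>G\<^esub> f u \<longleftrightarrow> E u v"
    and orders: "\<And>u. u \<in> V \<Longrightarrow> f u [^]\<^bsub>G\<^esub> (m u :: nat) = \<one>\<^bsub>G\<^esub>"
    and coprime: "\<And>u v. u \<in> V \<Longrightarrow> v \<in> V \<Longrightarrow> E u v \<Longrightarrow> coprime (m u) (m v)"
  shows "induced_subgraph_embedding V E (carrier G) (deep_commuting_adj G) f"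
  unfolding induced_subgraph_embedding_def
proof (intro conjI ballI impI f)
  fix u v
  assume uv: "u \<in> V" "v \<in> V" "u \<noteq> v"
  have fuv: "f u \<in> carrier G" "f v \<in> carrier G" "f u \<noteq> f v"
    using f uv by (auto dest: inj_onD)
  show "E u v \<longleftrightarrow> deep_commuting_adj G (f u) (f v)"
  proof
    assume "E u v"
    then show "deep_commuting_adj G (f u) (f v)"
      using commute_iff[OF uv] orders uv coprime[OF uv(1,2)]
      by (intro deep_commuting_adj_if_coprime_orders[OF fuv]) auto
  next
    assume "deep_commuting_adj G (f u) (f v)"
    then show "E u v"
      using deep_commuting_adj_imp_commute[OF cover] commute_iff[OF uv] by blast
  qed
qed

section \<open>The Heisenberg group modulo \<open>N\<close>\<close>

fun heis_mult :: "int \<times> int \<times> int \<Rightarrow> int \<times> int \<times> int \<Rightarrow> int \<times> int \<times> int" where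
  "heis_mult (a, b, c) (a', b', c') = (a + a', b + b', c + c' + a * b')"

fun heis_inv :: "int \<times> int \<times> int \<Rightarrow> int \<times> int \<times> int" where
  "heis_inv (a, b, c) = (- a, - b, a * b - c)"

fun heis_reduce :: "int \<Rightarrow> int \<times> int \<times> int \<Rightarrow> int \<times> int \<times> int" where
  "heis_reduce N (a, b, c) = (a mod N, b mod N, c mod N)"

text \<open>The triple \<open>(a, b, c)\<close> stands for the matrix \<open>[[1, a, c], [0, 1, b], [0, 0, 1]]\<close>, so
  \<open>heisenberg N\<close> is the Heisenberg group over \<open>\<int>/N\<close>, with its elements coded in \<open>nat\<close>
  by \<open>to_nat\<close>.\<close>
definition heisenberg :: "int \<Rightarrow> nat monoid" where
  "heisenberg N =
    \<lparr>carrier = to_nat ` range (heis_reduce N),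
     monoid.mult = (\<lambda>x y. to_nat (heis_reduce N (heis_mult (from_nat x) (from_nat y)))),
     monoid.one = to_nat (heis_reduce N (0, 0, 0))\<rparr>"

lemma heis_mult_assoc: "heis_mult (heis_mult p q) r = heis_mult p (heis_mult q r)"
  by (cases p, cases q, cases r) (simp add: algebra_simps)

lemma heis_reduce_mult_reduce_left [simp]:
  "heis_reduce N (heis_mult (heis_reduce N p) q) = heis_reduce N (heis_mult p q)"
  by (cases p, cases q) (auto intro!: mod_add_cong mod_mult_cong)

lemma heis_reduce_mult_reduce_right [simp]:
  "heis_reduce N (heis_mult p (heis_reduce N q)) = heis_reduce N (heis_mult p q)"
  by (cases p, cases q) (auto intro!: mod_add_cong mod_mult_cong)

lemma heisenberg_mult:
  "to_nat (heis_reduce N p) \<otimes>\<^bsub>heisenberg N\<^esub> to_nat (heis_reduce N q) =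
    to_nat (heis_reduce N (heis_mult p q))"
  by (simp add: heisenberg_def)

lemma heisenberg_elem_in_carrier: "to_nat (heis_reduce N p) \<in> carrier (heisenberg N)"
  by (simp add: heisenberg_def)

lemma heisenberg_carrierE:
  assumes "x \<in> carrier (heisenberg N)"
  obtains a b c where "x = to_nat (heis_reduce N (a, b, c))"
proof -
  obtain p where "x = to_nat (heis_reduce N p)"
    using assms by (auto simp: heisenberg_def)
  then show ?thesis
    using that by (metis prod_cases3)
qed

lemma heisenberg_one: "\<one>\<^bsub>heisenberg N\<^esub> = to_nat (heis_reduce N (0, 0, 0))"
  by (simp add: heisenberg_def)

lemma heisenberg_elem_eq_iff [simp]:
  "to_nat (heis_reduce N p) = to_nat (heis_reduce N q) \<longleftrightarrow> heis_reduce N p = heis_reduce N q"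
  by (simp add: inj_eq)

lemma group_heisenberg: "group (heisenberg N)"
proof (rule groupI)
  fix x y z
  assume "x \<in> carrier (heisenberg N)" "y \<in> carrier (heisenberg N)" "z \<in> carrier (heisenberg N)"
  then obtain p q r where "x = to_nat (heis_reduce N p)" "y = to_nat (heis_reduce N q)"
    "z = to_nat (heis_reduce N r)"
    by (auto simp: heisenberg_def)
  then show "x \<otimes>\<^bsub>heisenberg N\<^esub> y \<in> carrier (heisenberg N)"
    and "x \<otimes>\<^bsub>heisenberg N\<^esub> y \<otimes>\<^bsub>heisenberg N\<^esub> z = x \<otimes>\<^bsub>heisenberg N\<^esub> (y \<otimes>\<^bsub>heisenberg N\<^esub> z)"
    by (simp_all add: heisenberg_mult heis_mult_assoc) (simp add: heisenberg_def)
next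
  fix x
  assume "x \<in> carrier (heisenberg N)"
  then obtain a b c where x: "x = to_nat (heis_reduce N (a, b, c))"
    by (rule heisenberg_carrierE)
  show "\<one>\<^bsub>heisenberg N\<^esub> \<otimes>\<^bsub>heisenberg N\<^esub> x = x"
    unfolding x heisenberg_one heisenberg_mult by simp
  show "\<exists>y\<in>carrier (heisenberg N). y \<otimes>\<^bsub>heisenberg N\<^esub> x = \<one>\<^bsub>heisenberg N\<^esub>"
  proof
    show "to_nat (heis_reduce N (heis_inv (a, b, c))) \<otimes>\<^bsub>heisenberg N\<^esub> x = \<one>\<^bsub>heisenberg N\<^esub>"
      unfolding x heisenberg_one heisenberg_mult by simp
  qed (rule heisenberg_elem_in_carrier)
qed (simp only: heisenberg_one heisenberg_elem_in_carrier)

lemma finite_carrier_heisenberg: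
  assumes "N > 0"
  shows "finite (carrier (heisenberg N))"
proof -
  have "range (heis_reduce N) \<subseteq> {0..<N} \<times> {0..<N} \<times> {0..<N}"
    using assms by auto
  then have "finite (range (heis_reduce N))"
    by (rule finite_subset) simp
  then show ?thesis
    by (simp add: heisenberg_def)
qed

lemma heisenberg_inv:
  "inv\<^bsub>heisenberg N\<^esub> (to_nat (heis_reduce N p)) = to_nat (heis_reduce N (heis_inv p))"
proof (rule group.inv_equality[OF group_heisenberg])
  show "to_nat (heis_reduce N (heis_inv p)) \<otimes>\<^bsub>heisenberg N\<^esub> to_nat (heis_reduce N p) =
      \<one>\<^bsub>heisenberg N\<^esub>"
    unfolding heisenberg_mult heisenberg_one by (cases p) simp
qed (simp_all add: heisenberg_elem_in_carrier)

lemma heisenberg_center: "to_nat (heis_reduce N (0, 0, z)) \<in> group_center (heisenberg N)"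
proof -
  have "to_nat (heis_reduce N (0, 0, z)) \<otimes>\<^bsub>heisenberg N\<^esub> x =
      x \<otimes>\<^bsub>heisenberg N\<^esub> to_nat (heis_reduce N (0, 0, z))"
    if x_carrier: "x \<in> carrier (heisenberg N)" for x
  proof -
    obtain a b c where x: "x = to_nat (heis_reduce N (a, b, c))"
      using x_carrier by (rule heisenberg_carrierE)
    show ?thesis
      unfolding x heisenberg_mult by (simp add: ac_simps)
  qed
  then show ?thesis
    unfolding group_center_def using heisenberg_elem_in_carrier by blast
qed

lemma commutators_central_heisenberg: "commutators_central (heisenberg N)"
  unfolding commutators_central_def
proof (intro ballI)
  fix x y
  assume "x \<in> carrier (heisenberg N)" "y \<in> carrier (heisenberg N)"
  then obtain a b c a' b' c' where x: "x = to_nat (heis_reduce N (a, b, c))"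
    and y: "y = to_nat (heis_reduce N (a', b', c'))"
    by (metis heisenberg_carrierE)
  have "commutator (heisenberg N) x y = to_nat (heis_reduce N (0, 0, a * b' - a' * b))"
    unfolding commutator_def x y heisenberg_inv heisenberg_mult by (simp add: algebra_simps)
  then show "commutator (heisenberg N) x y \<in> group_center (heisenberg N)"
    using heisenberg_center by metis
qed

lemma heisenberg_commute_iff:
  "to_nat (heis_reduce N (a, b, c)) \<otimes>\<^bsub>heisenberg N\<^esub> to_nat (heis_reduce N (a', b', c')) =
    to_nat (heis_reduce N (a', b', c')) \<otimes>\<^bsub>heisenberg N\<^esub> to_nat (heis_reduce N (a, b, c))
    \<longleftrightarrow> N dvd a * b' - a' * b"
  unfolding heisenberg_mult heisenberg_elem_eq_iff
  by (simp add: mod_eq_dvd_iff ac_simps)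

lemma heisenberg_nat_pow:
  assumes "N dvd a * b"
  shows "to_nat (heis_reduce N (a, b, 0)) [^]\<^bsub>heisenberg N\<^esub> k =
    to_nat (heis_reduce N (int k * a, int k * b, 0))"
proof (induction k)
  case 0
  show ?case
    by (simp add: heisenberg_one)
next
  case (Suc k)
  have "N dvd int k * a * b"
    using assms by (simp add: mult.assoc)
  then show ?case
    unfolding nat_pow_Suc Suc heisenberg_mult by (simp add: algebra_simps)
qed

lemma heisenberg_nat_pow_eq_one:
  assumes "N dvd a * b" "N dvd int k * a" "N dvd int k * b"
  shows "to_nat (heis_reduce N (a, b, 0)) [^]\<^bsub>heisenberg N\<^esub> k = \<one>\<^bsub>heisenberg N\<^esub>"
  unfolding heisenberg_nat_pow[OF assms(1)] heisenberg_one using assms(2,3) by simp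

lemma nilpotent_heisenberg: "nilpotent_group (heisenberg N)"
  using group.nilpotent_if_commutators_central[OF group_heisenberg commutators_central_heisenberg] .

lemma schur_cover_heisenberg:
  assumes "N > 0"
  shows "\<exists>(E :: nat monoid) \<pi>. schur_cover E (heisenberg N) \<pi>"
  using stem_extension_card_le[OF _ finite_carrier_heisenberg[OF assms]
      commutators_central_heisenberg]
  by (intro schur_cover_exists[OF group_heisenberg]) blast

section \<open>Encoding a graph by divisibility\<close>

lemma ex_inj_on_primes:
  assumes "finite L"
  obtains p :: "'l \<Rightarrow> nat" where "inj_on p L" "\<And>l. l \<in> L \<Longrightarrow> Factorial_Ring.prime (p l)"
proof -
  have "\<exists>P. finite P \<and> card P = card L \<and> P \<subseteq> {p :: nat. Factorial_Ring.prime p}"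
    by (rule infinite_arbitrarily_large[OF primes_infinite])
  then obtain P where P: "finite P" "card P = card L" "P \<subseteq> {p :: nat. Factorial_Ring.prime p}"
    by blast
  obtain p where p: "bij_betw p L P"
    using finite_same_card_bij[OF assms P(1) P(2)[symmetric]] by blast
  show ?thesis
  proof (rule that)
    show "inj_on p L"
      using p by (rule bij_betw_imp_inj_on)
    show "Factorial_Ring.prime (p l)" if "l \<in> L" for l
      using bij_betw_apply[OF p that] P(3) by blast
  qed
qed

lemma prod_dvd_prod_mult_prod_diff:
  fixes f :: "'a \<Rightarrow> 'b::comm_monoid_mult"
  assumes "finite L" "finite S" "L \<inter> Y \<subseteq> S"
  shows "prod f L dvd prod f S * prod f (L - Y)"
proof -
  have "prod f L = prod f (L - Y) * prod f (L \<inter> Y)"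
    using prod.subset_diff[of "L \<inter> Y" L f] assms(1) by (simp add: Diff_Int)
  moreover have "prod f (L \<inter> Y) dvd prod f S"
    using assms(2,3) by (rule prod_dvd_prod_subset)
  ultimately show ?thesis
    by (metis dvd_refl mult.commute mult_dvd_mono)
qed

context
  fixes p :: "'l \<Rightarrow> nat" and L :: "'l set"
  assumes inj: "inj_on p L" and prime: "\<And>l. l \<in> L \<Longrightarrow> Factorial_Ring.prime (p l)"
begin

lemma prime_dvd_prod_diff_iff:
  assumes "finite L" "l \<in> L"
  shows "int (p l) dvd (\<Prod>i\<in>L - Y. int (p i)) \<longleftrightarrow> l \<notin> Y"
proof
  assume "int (p l) dvd (\<Prod>i\<in>L - Y. int (p i))"
  then obtain i where i: "i \<in> L - Y" "int (p l) dvd int (p i)"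
    using prime_dvd_prod_iff[of "L - Y" "int (p l)" "\<lambda>i. int (p i)"] prime assms by auto
  then have "p l = p i"
    using prime assms by (simp add: primes_dvd_imp_eq)
  then show "l \<notin> Y"
    using inj_onD[OF inj] i assms by blast
qed (use assms in \<open>auto intro: dvd_prodI\<close>)

lemma coprime_prod_prod_if_disjoint:
  assumes "S \<subseteq> L" "T \<subseteq> L" "S \<inter> T = {}"
  shows "coprime (prod p S) (prod p T)"
proof (intro prod_coprime_left prod_coprime_right)
  fix i j
  assume "i \<in> S" "j \<in> T"
  then have "i \<noteq> j" "i \<in> L" "j \<in> L"
    using assms by blast+
  then have "p i \<noteq> p j"
    by (rule inj_on_contraD[OF inj])
  moreover have "Factorial_Ring.prime (p i)" "Factorial_Ring.prime (p j)"
    using \<open>i \<in> S\<close> \<open>j \<in> T\<close> assms prime by auto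
  ultimately show "coprime (p i) (p j)"
    by (simp add: primes_coprime)
qed

lemma not_prod_dvd_diff:
  assumes "finite L" "l \<in> L" "l \<in> A" "l \<notin> A'"
  shows "\<not> (\<Prod>i\<in>L. int (p i)) dvd (\<Prod>i\<in>L - A. int (p i)) - (\<Prod>i\<in>L - A'. int (p i))"
proof
  assume N_dvd: "(\<Prod>i\<in>L. int (p i)) dvd (\<Prod>i\<in>L - A. int (p i)) - (\<Prod>i\<in>L - A'. int (p i))"
  have "int (p l) dvd (\<Prod>i\<in>L. int (p i))"
    using assms(1,2) by (rule dvd_prodI)
  then have "int (p l) dvd (\<Prod>i\<in>L - A. int (p i)) - (\<Prod>i\<in>L - A'. int (p i))
      + (\<Prod>i\<in>L - A'. int (p i))"
    using N_dvd prime_dvd_prod_diff_iff[OF assms(1,2)] assms(4) by (blast intro: dvd_add dvd_trans)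
  then show False
    using prime_dvd_prod_diff_iff[OF assms(1,2)] assms(3) by simp
qed

lemma not_prod_dvd_cross_diff:
  assumes "finite L" "l \<in> L" "l \<in> A" "l \<in> B'" "l \<notin> A'"
  shows "\<not> (\<Prod>i\<in>L. int (p i)) dvd
    (\<Prod>i\<in>L - A. int (p i)) * (\<Prod>i\<in>L - B'. int (p i)) -
    (\<Prod>i\<in>L - A'. int (p i)) * (\<Prod>i\<in>L - B. int (p i))"
    (is "\<not> ?N dvd ?a * ?b' - ?a' * ?b")
proof
  assume N_dvd: "?N dvd ?a * ?b' - ?a' * ?b"
  have "int (p l) dvd ?N"
    using assms(1,2) by (rule dvd_prodI)
  then have "int (p l) dvd ?a * ?b' - ?a' * ?b + ?a' * ?b"
    using N_dvd prime_dvd_prod_diff_iff[OF assms(1,2)] assms(5)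
    by (blast intro: dvd_add dvd_trans dvd_mult2)
  moreover have "Factorial_Ring.prime (int (p l))"
    using prime[OF assms(2)] by simp
  ultimately show False
    using prime_dvd_prod_diff_iff[OF assms(1,2)] assms(3,4) by (simp add: prime_dvd_mult_iff)
qed

end

text \<open>Each vertex \<open>u\<close> gets two sets of labels \<open>A u\<close> and \<open>B u\<close>; with one prime per label,
  \<open>a u\<close> and \<open>b u\<close> are the products of the primes outside \<open>A u\<close> and \<open>B u\<close>, and \<open>m u\<close> is the
  product of the primes in \<open>A u \<union> B u\<close>.\<close>
lemma divisibility_model_of_labelling:
  fixes A B :: "'v \<Rightarrow> 'l set"
  assumes L: "finite L"
    and diagonal: "\<And>u. u \<in> V \<Longrightarrow> L \<inter> A u \<inter> B u = {}"
    and separating: "\<And>u v. u \<in> V \<Longrightarrow> v \<in> V \<Longrightarrow> u \<noteq> v \<Longrightarrow> \<exists>l\<in>L. l \<in> A u \<and> l \<notin> A v"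
    and edge: "\<And>u v. u \<in> V \<Longrightarrow> v \<in> V \<Longrightarrow> E u v \<Longrightarrow>
      L \<inter> A u \<inter> B v = {} \<and> L \<inter> (A u \<union> B u) \<inter> (A v \<union> B v) = {}"
    and non_edge: "\<And>u v. u \<in> V \<Longrightarrow> v \<in> V \<Longrightarrow> u \<noteq> v \<Longrightarrow> \<not> E u v \<Longrightarrow>
      \<exists>l\<in>L. l \<in> A u \<and> l \<in> B v \<and> l \<notin> A v"
    and sym: "\<And>u v. u \<in> V \<Longrightarrow> v \<in> V \<Longrightarrow> E u v \<Longrightarrow> E v u"
  obtains N :: int and a b :: "'v \<Rightarrow> int" and m :: "'v \<Rightarrow> nat"
  where "N > 0"
    and "\<And>u. u \<in> V \<Longrightarrow> N dvd a u * b u"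
    and "\<And>u. u \<in> V \<Longrightarrow> N dvd int (m u) * a u" "\<And>u. u \<in> V \<Longrightarrow> N dvd int (m u) * b u"
    and "\<And>u v. u \<in> V \<Longrightarrow> v \<in> V \<Longrightarrow> u \<noteq> v \<Longrightarrow> \<not> N dvd a u - a v"
    and "\<And>u v. u \<in> V \<Longrightarrow> v \<in> V \<Longrightarrow> u \<noteq> v \<Longrightarrow> E u v \<longleftrightarrow> N dvd a u * b v - a v * b u"
    and "\<And>u v. u \<in> V \<Longrightarrow> v \<in> V \<Longrightarrow> E u v \<Longrightarrow> coprime (m u) (m v)"
proof -
  obtain p :: "_ \<Rightarrow> nat" where inj: "inj_on p L" and prime: "\<And>l. l \<in> L \<Longrightarrow> Factorial_Ring.prime (p l)"
    using ex_inj_on_primes[OF L] by blast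
  define N where "N = (\<Prod>l\<in>L. int (p l))"
  define a where "a u = (\<Prod>l\<in>L - A u. int (p l))" for u
  define b where "b u = (\<Prod>l\<in>L - B u. int (p l))" for u
  define m where "m u = prod p (L \<inter> (A u \<union> B u))" for u
  have N_dvd: "N dvd (\<Prod>l\<in>S. int (p l)) * (\<Prod>l\<in>L - Y. int (p l))" if "finite S" "L \<inter> Y \<subseteq> S" for S Y
    unfolding N_def using L that by (rule prod_dvd_prod_mult_prod_diff)
  have N_dvd_ab: "N dvd a u * b v" if "L \<inter> A u \<inter> B v = {}" for u v
  proof -
    have "N dvd b v * a u"
      unfolding a_def b_def using L that by (intro N_dvd) auto
    then show ?thesis
      by (simp add: mult.commute)
  qed
  show ?thesis
  proof (rule that)
    show "N > 0"
      unfolding N_def using prime prime_gt_0_nat by (intro prod_pos) auto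
    show "N dvd a u * b u" if "u \<in> V" for u
      using N_dvd_ab diagonal[OF that] .
    show "N dvd int (m u) * a u" "N dvd int (m u) * b u" for u
      unfolding m_def a_def b_def of_nat_prod using L by (intro N_dvd; auto)+
    show "\<not> N dvd a u - a v" if "u \<in> V" "v \<in> V" "u \<noteq> v" for u v
      using separating[OF that] not_prod_dvd_diff[OF inj prime L] by (auto simp: N_def a_def)
    show "E u v \<longleftrightarrow> N dvd a u * b v - a v * b u" if uv: "u \<in> V" "v \<in> V" "u \<noteq> v" for u v
    proof
      assume "E u v"
      then have "N dvd a u * b v" "N dvd a v * b u"
        using N_dvd_ab edge[OF uv(1,2)] edge[OF uv(2,1)] sym[OF uv(1,2)] by blast+
      then show "N dvd a u * b v - a v * b u"
        by (rule dvd_diff)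
    next
      assume N_dvd_diff: "N dvd a u * b v - a v * b u"
      show "E u v"
      proof (rule ccontr)
        assume "\<not> E u v"
        then obtain l where l: "l \<in> L" "l \<in> A u" "l \<in> B v" "l \<notin> A v"
          using non_edge[OF uv] by blast
        show False
          using not_prod_dvd_cross_diff[OF inj prime L l, of "B u"] N_dvd_diff
          unfolding N_def a_def b_def by blast
      qed
    qed
    show "coprime (m u) (m v)" if "u \<in> V" "v \<in> V" "E u v" for u v
      unfolding m_def using edge[OF that]
      by (intro coprime_prod_prod_if_disjoint[OF inj prime]) auto
  qed
qed

lemma graph_divisibility_model:
  assumes "finite_simple_graph V E"
  obtains N :: int and a b :: "'v \<Rightarrow> int" and m :: "'v \<Rightarrow> nat"
  where "N > 0"
    and "\<And>u. u \<in> V \<Longrightarrow> N dvd a u * b u"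
    and "\<And>u. u \<in> V \<Longrightarrow> N dvd int (m u) * a u" "\<And>u. u \<in> V \<Longrightarrow> N dvd int (m u) * b u"
    and "\<And>u v. u \<in> V \<Longrightarrow> v \<in> V \<Longrightarrow> u \<noteq> v \<Longrightarrow> \<not> N dvd a u - a v"
    and "\<And>u v. u \<in> V \<Longrightarrow> v \<in> V \<Longrightarrow> u \<noteq> v \<Longrightarrow> E u v \<longleftrightarrow> N dvd a u * b v - a v * b u"
    and "\<And>u v. u \<in> V \<Longrightarrow> v \<in> V \<Longrightarrow> E u v \<Longrightarrow> coprime (m u) (m v)"
proof -
  have fin: "finite V" and sym: "\<And>u v. u \<in> V \<Longrightarrow> v \<in> V \<Longrightarrow> E u v \<Longrightarrow> E v u"
    and irrefl: "\<And>u. u \<in> V \<Longrightarrow> \<not> E u u"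
    using assms by (auto simp: finite_simple_graph_def)
  define L :: "('v + 'v \<times> 'v) set"
    where "L = Inl ` V \<union> Inr ` {(u, v) \<in> V \<times> V. u \<noteq> v \<and> \<not> E u v}"
  define A :: "'v \<Rightarrow> ('v + 'v \<times> 'v) set" where "A u = insert (Inl u) (Inr ` ({u} \<times> UNIV))" for u
  define B :: "'v \<Rightarrow> ('v + 'v \<times> 'v) set" where "B u = Inr ` (UNIV \<times> {u})" for u
  show ?thesis
  proof (rule divisibility_model_of_labelling[of L V A B E])
    show "finite L"
      using fin unfolding L_def by (auto intro: finite_subset[of _ "V \<times> V"])
    show "L \<inter> A u \<inter> B u = {}" for u
      by (auto simp: L_def A_def B_def)
    show "\<exists>l\<in>L. l \<in> A u \<and> l \<notin> A v" if "u \<in> V" "v \<in> V" "u \<noteq> v" for u v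
      using that by (auto simp: L_def A_def)
    show "L \<inter> A u \<inter> B v = {} \<and> L \<inter> (A u \<union> B u) \<inter> (A v \<union> B v) = {}"
      if "u \<in> V" "v \<in> V" "E u v" for u v
      using that sym irrefl by (auto simp: L_def A_def B_def)
    show "\<exists>l\<in>L. l \<in> A u \<and> l \<in> B v \<and> l \<notin> A v" if "u \<in> V" "v \<in> V" "u \<noteq> v" "\<not> E u v" for u v
      using that by (auto simp: L_def A_def B_def)
  next
    show "E v u" if "u \<in> V" "v \<in> V" "E u v" for u v
      using sym that by blast
  qed (rule that)
qed

lemma graph_heisenberg_model:
  assumes "finite_simple_graph V E"
  obtains N :: int and f :: "'v \<Rightarrow> nat" and m :: "'v \<Rightarrow> nat"
  where "N > 0" "f ` V \<subseteq> carrier (heisenberg N)" "inj_on f V"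
    and "\<And>u v. u \<in> V \<Longrightarrow> v \<in> V \<Longrightarrow> u \<noteq> v \<Longrightarrow>
      f u \<otimes>\<^bsub>heisenberg N\<^esub> f v = f v \<otimes>\<^bsub>heisenberg N\<^esub> f u \<longleftrightarrow> E u v"
    and "\<And>u. u \<in> V \<Longrightarrow> f u [^]\<^bsub>heisenberg N\<^esub> m u = \<one>\<^bsub>heisenberg N\<^esub>"
    and "\<And>u v. u \<in> V \<Longrightarrow> v \<in> V \<Longrightarrow> E u v \<Longrightarrow> coprime (m u) (m v)"
proof -
  obtain N :: int and a b :: "'v \<Rightarrow> int" and m :: "'v \<Rightarrow> nat" where N_pos: "N > 0"
    and ab: "\<And>u. u \<in> V \<Longrightarrow> N dvd a u * b u"
    and order: "\<And>u. u \<in> V \<Longrightarrow> N dvd int (m u) * a u" "\<And>u. u \<in> V \<Longrightarrow> N dvd int (m u) * b u"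
    and a_inj: "\<And>u v. u \<in> V \<Longrightarrow> v \<in> V \<Longrightarrow> u \<noteq> v \<Longrightarrow> \<not> N dvd a u - a v"
    and edge_iff: "\<And>u v. u \<in> V \<Longrightarrow> v \<in> V \<Longrightarrow> u \<noteq> v \<Longrightarrow> E u v \<longleftrightarrow> N dvd a u * b v - a v * b u"
    and coprime: "\<And>u v. u \<in> V \<Longrightarrow> v \<in> V \<Longrightarrow> E u v \<Longrightarrow> coprime (m u) (m v)"
    using graph_divisibility_model[OF assms] by blast
  define f where "f u = to_nat (heis_reduce N (a u, b u, 0))" for u
  show ?thesis
  proof (rule that[OF N_pos])
    show "f ` V \<subseteq> carrier (heisenberg N)"
      unfolding f_def using heisenberg_elem_in_carrier by blast
    show "inj_on f V"
      using a_inj by (auto simp: inj_on_def f_def mod_eq_dvd_iff)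
    show "f u \<otimes>\<^bsub>heisenberg N\<^esub> f v = f v \<otimes>\<^bsub>heisenberg N\<^esub> f u \<longleftrightarrow> E u v"
      if "u \<in> V" "v \<in> V" "u \<noteq> v" for u v
      unfolding f_def heisenberg_commute_iff using edge_iff[OF that] by simp
    show "f u [^]\<^bsub>heisenberg N\<^esub> m u = \<one>\<^bsub>heisenberg N\<^esub>" if "u \<in> V" for u
      unfolding f_def using ab[OF that] order[OF that] by (rule heisenberg_nat_pow_eq_one)
  qed (rule coprime)
qed

theorem theorem3p5:
  fixes V :: "'v set" and E :: "'v \<Rightarrow> 'v \<Rightarrow> bool"
  assumes "finite_simple_graph V E"
  shows "\<exists>(G :: nat monoid) f. group G \<and> finite (carrier G) \<and> nilpotent_group G \<and>
           induced_subgraph_embedding V E (carrier G) (deep_commuting_adj G) f"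
proof -
  obtain N :: int and f :: "'v \<Rightarrow> nat" and m :: "'v \<Rightarrow> nat" where N_pos: "N > 0"
    and f: "f ` V \<subseteq> carrier (heisenberg N)" "inj_on f V"
    and commute_iff: "\<And>u v. u \<in> V \<Longrightarrow> v \<in> V \<Longrightarrow> u \<noteq> v \<Longrightarrow>
      f u \<otimes>\<^bsub>heisenberg N\<^esub> f v = f v \<otimes>\<^bsub>heisenberg N\<^esub> f u \<longleftrightarrow> E u v"
    and orders: "\<And>u. u \<in> V \<Longrightarrow> f u [^]\<^bsub>heisenberg N\<^esub> m u = \<one>\<^bsub>heisenberg N\<^esub>"
    and coprime: "\<And>u v. u \<in> V \<Longrightarrow> v \<in> V \<Longrightarrow> E u v \<Longrightarrow> coprime (m u) (m v)"
    using graph_heisenberg_model[OF assms] by blast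
  obtain C :: "nat monoid" and \<pi> where "schur_cover C (heisenberg N) \<pi>"
    using schur_cover_heisenberg[OF N_pos] by blast
  then have "induced_subgraph_embedding V E (carrier (heisenberg N))
      (deep_commuting_adj (heisenberg N)) f"
    using f commute_iff orders coprime by (rule induced_subgraph_embedding_deep_commuting)
  then show ?thesis
    using group_heisenberg finite_carrier_heisenberg[OF N_pos] nilpotent_heisenberg by blast
qed

end
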